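(* Let $I,I'\subset\mathbb{K}[x_1,\dots,x_n]$ be monomial ideals and define $m_I(\alpha)=\#E_\alpha(I)$ for $\alpha\in\mathbb{Z}^n$, and similarly $m_{I'}$. Suppose that $m_I(\alpha)=m_{I'}(\alpha)$ for all $\alpha\in\mathbb{Z}^n_{\ge0}$, and also for all $\alpha\in\mathbb{Z}^n\setminus\mathbb{Z}^n_{\ge0}$ such that there exists $1\le k\le n$ with $\alpha+e_k\in\mathbb{Z}^n_{\ge0}$ and $m_I(\alpha+e_k)=0$. Then $I=I'$.
   Context: $e_1,\dots,e_n$ is the standard basis of $\mathbb{Z}^n$. For a monomial ideal $I$, $\operatorname{supp}(I)=\{m\in\mathbb{Z}^n_{\ge0}\mid\mathbf{x}^m\in I\}$, $\operatorname{supp}^c(I)=\mathbb{Z}^n_{\ge0}\setminus\operatorname{supp}(I)$, and $E_\alpha(I)=\{e_i\mid\alpha+e_i\in\operatorname{supp}^c(I)\}$ for $\alpha\in\mathbb{Z}^n$. *)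

theory Defs
  imports "HOL-Library.Poly_Mapping" "HOL-Library.Function_Algebras"
begin

text \<open>Polynomial ring K[x_i | i in 'n] over a field K, with a finite type 'n of
  variables (so n = CARD('n)).\<close>

type_synonym ('n, 'k) mpoly = "('n \<Rightarrow>\<^sub>0 nat) \<Rightarrow>\<^sub>0 'k"

definition xmon :: "('n \<Rightarrow>\<^sub>0 nat) \<Rightarrow> ('n, 'k::field) mpoly" where
  "xmon m = Poly_Mapping.single m 1"

definition is_ideal :: "('n, 'k::field) mpoly set \<Rightarrow> bool" where
  "is_ideal I \<longleftrightarrow> 0 \<in> I \<and> (\<forall>p\<in>I. \<forall>q\<in>I. p + q \<in> I) \<and> (\<forall>p\<in>I. \<forall>r. r * p \<in> I)"

definition ideal_gen :: "('n, 'k::field) mpoly set \<Rightarrow> ('n, 'k) mpoly set" where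
  "ideal_gen S = \<Inter>{J. is_ideal J \<and> S \<subseteq> J}"

definition monomial_ideal :: "('n, 'k::field) mpoly set \<Rightarrow> bool" where
  "monomial_ideal I \<longleftrightarrow> (\<exists>M. I = ideal_gen (xmon ` M))"

definition nonneg :: "('n \<Rightarrow> int) \<Rightarrow> bool" where
  "nonneg \<alpha> \<longleftrightarrow> (\<forall>i. 0 \<le> \<alpha> i)"

definition to_mon :: "('n::finite \<Rightarrow> int) \<Rightarrow> ('n \<Rightarrow>\<^sub>0 nat)" where
  "to_mon \<alpha> = Abs_poly_mapping (\<lambda>i. nat (\<alpha> i))"

definition supp_mi :: "('n::finite, 'k::field) mpoly set \<Rightarrow> ('n \<Rightarrow> int) set" where
  "supp_mi I = {\<alpha>. nonneg \<alpha> \<and> xmon (to_mon \<alpha>) \<in> I}"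

definition suppc_mi :: "('n::finite, 'k::field) mpoly set \<Rightarrow> ('n \<Rightarrow> int) set" where
  "suppc_mi I = {\<alpha>. nonneg \<alpha>} - supp_mi I"

definition unitvec :: "'n \<Rightarrow> ('n \<Rightarrow> int)" where
  "unitvec i = (\<lambda>j. if j = i then 1 else 0)"

definition E_set :: "('n::finite, 'k::field) mpoly set \<Rightarrow> ('n \<Rightarrow> int) \<Rightarrow> ('n \<Rightarrow> int) set" where
  "E_set I \<alpha> = {unitvec i | i. \<alpha> + unitvec i \<in> suppc_mi I}"

definition m_fun :: "('n::finite, 'k::field) mpoly set \<Rightarrow> ('n \<Rightarrow> int) \<Rightarrow> nat" where
  "m_fun I \<alpha> = card (E_set I \<alpha>)"

end

theory Submission
  imports Defs
begin

text \<open>A monomial ideal contains a polynomial iff it contains every monomial of its support,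
  so it is determined by its support. The support is reconstructed one coordinate line at
  a time: fix a variable \<open>k\<close> and induct on \<open>\<beta> k\<close>. If \<open>\<beta> k = 0\<close>, the point
  \<open>\<alpha> = \<beta> - e\<^sub>k\<close> lies outside the orthant and has \<open>\<beta>\<close> as its only neighbour in it, so
  \<open>m\<^sub>I(\<alpha>)\<close> records whether \<open>\<beta> \<in> supp(I)\<close>; the hypothesis on such \<open>\<alpha>\<close> applies when
  \<open>m\<^sub>I(\<beta>) = 0\<close>, and otherwise \<open>\<beta>\<close> lies in neither support because supports are
  upward closed. If \<open>\<beta> k > 0\<close>, the neighbours \<open>\<gamma> + e\<^sub>i\<close> (\<open>i \<noteq> k\<close>) of \<open>\<gamma> = \<beta> - e\<^sub>k\<close> are
  settled by induction, and \<open>m\<^sub>I(\<gamma>) = m\<^sub>I\<^sub>'(\<gamma>)\<close> then forces agreement at \<open>\<gamma> + e\<^sub>k = \<beta>\<close>.\<close>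

lemma is_ideal_ideal_gen: "is_ideal (ideal_gen S)"
  unfolding ideal_gen_def is_ideal_def by auto

lemma ideal_gen_superset: "S \<subseteq> ideal_gen S"
  unfolding ideal_gen_def by auto

lemma ideal_gen_least: "is_ideal J \<Longrightarrow> S \<subseteq> J \<Longrightarrow> ideal_gen S \<subseteq> J"
  unfolding ideal_gen_def by auto

lemma is_ideal_sum_mem:
  assumes "is_ideal J" "finite A" "\<And>a. a \<in> A \<Longrightarrow> f a \<in> J"
  shows "sum f A \<in> J"
  using assms(2,3) by (induction A rule: finite_induct) (use assms(1) in \<open>auto simp: is_ideal_def\<close>)

lemma monomial_ideal_is_ideal: "monomial_ideal I \<Longrightarrow> is_ideal I"
  unfolding monomial_ideal_def using is_ideal_ideal_gen by blast

lemma xmon_add: "xmon (a + b) = (xmon a * xmon b :: ('n, 'k::field) mpoly)"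
  unfolding xmon_def by (simp add: mult_single)

lemma keys_xmon: "Poly_Mapping.keys (xmon m :: ('n, 'k::field) mpoly) = {m}"
  by (simp add: xmon_def)

lemma mpoly_eq_sum_monomials:
  "(p :: ('n, 'k::field) mpoly) =
     (\<Sum>m\<in>Poly_Mapping.keys p. Poly_Mapping.single 0 (Poly_Mapping.lookup p m) * xmon m)"
proof (rule poly_mapping_eqI)
  fix k
  have "Poly_Mapping.lookup
          (\<Sum>m\<in>Poly_Mapping.keys p. Poly_Mapping.single 0 (Poly_Mapping.lookup p m) * xmon m) k
      = (\<Sum>m\<in>Poly_Mapping.keys p. Poly_Mapping.lookup (Poly_Mapping.single m (Poly_Mapping.lookup p m)) k)"
    by (simp add: lookup_sum xmon_def mult_single)
  also have "\<dots> = Poly_Mapping.lookup p k"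
    by (simp add: lookup_single when_def in_keys_iff)
  finally show "Poly_Mapping.lookup p k = Poly_Mapping.lookup
          (\<Sum>m\<in>Poly_Mapping.keys p. Poly_Mapping.single 0 (Poly_Mapping.lookup p m) * xmon m) k"
    by simp
qed

lemma monomial_ideal_mem_iff_keys:
  fixes I :: "('n, 'k::field) mpoly set"
  assumes "monomial_ideal I"
  shows "p \<in> I \<longleftrightarrow> (\<forall>m\<in>Poly_Mapping.keys p. xmon m \<in> I)"
proof -
  obtain M where M: "I = ideal_gen (xmon ` M)"
    using assms monomial_ideal_def by blast
  have ideal: "is_ideal I"
    using assms by (rule monomial_ideal_is_ideal)
  define J where "J = {p :: ('n, 'k) mpoly. \<forall>m\<in>Poly_Mapping.keys p. xmon m \<in> I}"
  have "is_ideal J"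
    unfolding is_ideal_def
  proof (intro conjI ballI allI)
    show "0 \<in> J" by (simp add: J_def)
  next
    fix p q assume "p \<in> J" "q \<in> J"
    then show "p + q \<in> J" using keys_add[of p q] by (auto simp: J_def)
  next
    fix p r assume p: "p \<in> J"
    have "xmon m \<in> I" if m: "m \<in> Poly_Mapping.keys (r * p)" for m
    proof -
      obtain a b where "m = a + b" "b \<in> Poly_Mapping.keys p"
        using m keys_mult[of r p] by blast
      then show ?thesis
        using p ideal unfolding J_def is_ideal_def by (simp add: xmon_add)
    qed
    then show "r * p \<in> J" by (simp add: J_def)
  qed
  moreover have "xmon ` M \<subseteq> J"
    using ideal_gen_superset[of "xmon ` M"] by (auto simp: J_def M keys_xmon)
  ultimately have "I \<subseteq> J"
    unfolding M by (rule ideal_gen_least)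
  moreover have "J \<subseteq> I"
  proof
    fix p assume "p \<in> J"
    then have "(\<Sum>m\<in>Poly_Mapping.keys p. Poly_Mapping.single 0 (Poly_Mapping.lookup p m) * xmon m) \<in> I"
      using ideal by (intro is_ideal_sum_mem) (auto simp: J_def is_ideal_def)
    then show "p \<in> I"
      using mpoly_eq_sum_monomials[of p] by argo
  qed
  ultimately show ?thesis
    by (auto simp: J_def)
qed

lemma monomial_ideal_eqI:
  fixes I I' :: "('n, 'k::field) mpoly set"
  assumes "monomial_ideal I" "monomial_ideal I'" "\<And>m. xmon m \<in> I \<longleftrightarrow> xmon m \<in> I'"
  shows "I = I'"
  using monomial_ideal_mem_iff_keys[OF assms(1)] monomial_ideal_mem_iff_keys[OF assms(2)] assms(3)
  by blast

lemma lookup_to_mon: "Poly_Mapping.lookup (to_mon \<alpha>) = (\<lambda>i. nat (\<alpha> i))"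
  unfolding to_mon_def by (simp add: lookup_Abs_poly_mapping)

lemma to_mon_of_lookup: "to_mon (\<lambda>i. int (Poly_Mapping.lookup m i)) = m"
  by (rule poly_mapping_eqI) (simp add: lookup_to_mon)

lemma to_mon_add_unitvec:
  assumes "nonneg \<beta>"
  shows "to_mon (\<beta> + unitvec i) = Poly_Mapping.single i 1 + to_mon \<beta>"
  using assms
  by (intro poly_mapping_eqI)
     (simp add: nonneg_def lookup_to_mon lookup_add lookup_single when_def unitvec_def nat_add_distrib)

lemma nonneg_add_unitvec: "nonneg \<beta> \<Longrightarrow> nonneg (\<beta> + unitvec i)"
  unfolding nonneg_def unitvec_def by auto

lemma suppc_mi_iff: "\<beta> \<in> suppc_mi I \<longleftrightarrow> nonneg \<beta> \<and> \<beta> \<notin> supp_mi I"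
  unfolding suppc_mi_def by auto

lemma supp_mi_add_unitvec:
  assumes "monomial_ideal I" "\<beta> \<in> supp_mi I"
  shows "\<beta> + unitvec i \<in> supp_mi I"
  using assms monomial_ideal_is_ideal[OF assms(1)]
  by (simp add: supp_mi_def is_ideal_def nonneg_add_unitvec to_mon_add_unitvec xmon_add)

lemma m_fun_eq_card: "m_fun I \<alpha> = card {i. \<alpha> + unitvec i \<in> suppc_mi I}"
proof -
  have "inj unitvec"
    unfolding inj_def unitvec_def by (metis zero_neq_one)
  moreover have "E_set I \<alpha> = unitvec ` {i. \<alpha> + unitvec i \<in> suppc_mi I}"
    unfolding E_set_def by auto
  ultimately show ?thesis
    unfolding m_fun_def by (metis card_image inj_on_subset subset_UNIV)
qed

lemma m_fun_eq_0_if_mem_supp_mi: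
  "monomial_ideal I \<Longrightarrow> \<beta> \<in> supp_mi I \<Longrightarrow> m_fun I \<beta> = 0"
  by (simp add: m_fun_eq_card suppc_mi_iff supp_mi_add_unitvec)

lemma m_fun_minus_unitvec_on_boundary:
  assumes "nonneg \<beta>" "\<beta> k = 0"
  shows "m_fun I (\<beta> - unitvec k) = (if \<beta> \<in> supp_mi I then 0 else 1)"
proof -
  have "\<not> nonneg (\<beta> - unitvec k + unitvec i)" if "i \<noteq> k" for i
    using assms that unfolding nonneg_def unitvec_def by (auto intro!: exI[of _ k])
  then have "\<beta> - unitvec k + unitvec i \<in> suppc_mi I \<longleftrightarrow> i = k \<and> \<beta> \<notin> supp_mi I" for i
    using assms(1) by (cases "i = k") (auto simp: suppc_mi_iff)
  then have "{i. \<beta> - unitvec k + unitvec i \<in> suppc_mi I} = (if \<beta> \<in> supp_mi I then {} else {k})"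
    by auto
  then show ?thesis
    by (simp add: m_fun_eq_card)
qed

lemma mem_iff_if_card_eq_and_Diff_singleton_eq:
  assumes "finite A" "finite B" "card A = card B" "A - {x} = B - {x}"
  shows "x \<in> A \<longleftrightarrow> x \<in> B"
  using assms card_Diff1_less_iff[of A x] card_Diff1_less_iff[of B x]
  by metis

lemma supp_mi_agree_at_add_unitvec:
  assumes "nonneg \<gamma>" "m_fun I \<gamma> = m_fun I' \<gamma>"
    and "\<And>i. i \<noteq> k \<Longrightarrow> \<gamma> + unitvec i \<in> supp_mi I \<longleftrightarrow> \<gamma> + unitvec i \<in> supp_mi I'"
  shows "\<gamma> + unitvec k \<in> supp_mi I \<longleftrightarrow> \<gamma> + unitvec k \<in> supp_mi I'"
proof -
  define A where "A = {i. \<gamma> + unitvec i \<in> suppc_mi I}"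
  define B where "B = {i. \<gamma> + unitvec i \<in> suppc_mi I'}"
  have "A - {k} = B - {k}"
    using assms(3) by (auto simp: A_def B_def suppc_mi_iff)
  moreover have "card A = card B"
    using assms(2) by (simp add: A_def B_def m_fun_eq_card)
  ultimately have "k \<in> A \<longleftrightarrow> k \<in> B"
    by (intro mem_iff_if_card_eq_and_Diff_singleton_eq) auto
  then show ?thesis
    using assms(1) by (simp add: A_def B_def suppc_mi_iff nonneg_add_unitvec)
qed

lemma supp_mi_agree_on_boundary:
  assumes "monomial_ideal I" "monomial_ideal I'" "nonneg \<beta>" "\<beta> k = 0"
    and "m_fun I \<beta> = m_fun I' \<beta>"
    and "m_fun I \<beta> = 0 \<Longrightarrow> m_fun I (\<beta> - unitvec k) = m_fun I' (\<beta> - unitvec k)"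
  shows "\<beta> \<in> supp_mi I \<longleftrightarrow> \<beta> \<in> supp_mi I'"
proof (cases "m_fun I \<beta> = 0")
  case True
  then show ?thesis
    using assms(3-6) by (simp add: m_fun_minus_unitvec_on_boundary split: if_splits)
next
  case False
  then show ?thesis
    using assms(1,2,5) m_fun_eq_0_if_mem_supp_mi by metis
qed

lemma supp_mi_eq_if_m_fun_agrees:
  fixes I I' :: "('n::finite, 'k::field) mpoly set"
  assumes "monomial_ideal I" and "monomial_ideal I'"
    and "\<forall>\<alpha>. nonneg \<alpha> \<longrightarrow> m_fun I \<alpha> = m_fun I' \<alpha>"
    and "\<forall>\<alpha>. (\<not> nonneg \<alpha> \<and> (\<exists>k. nonneg (\<alpha> + unitvec k) \<and> m_fun I (\<alpha> + unitvec k) = 0))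
              \<longrightarrow> m_fun I \<alpha> = m_fun I' \<alpha>"
  shows "supp_mi I = supp_mi I'"
proof -
  fix k :: 'n
  have agree: "\<beta> \<in> supp_mi I \<longleftrightarrow> \<beta> \<in> supp_mi I'" if "nonneg \<beta>" "\<beta> k = int c" for \<beta> c
    using that
  proof (induction c arbitrary: \<beta>)
    case 0
    have "\<not> nonneg (\<beta> - unitvec k)"
      using 0 by (auto simp: nonneg_def unitvec_def intro!: exI[of _ k])
    then have "m_fun I \<beta> = 0 \<Longrightarrow> m_fun I (\<beta> - unitvec k) = m_fun I' (\<beta> - unitvec k)"
      using assms(4) 0 by (metis diff_add_cancel)
    then show ?case
      using 0 assms(1-3) by (intro supp_mi_agree_on_boundary) auto
  next
    case (Suc c)
    define \<gamma> where "\<gamma> = \<beta> - unitvec k"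
    have \<gamma>_nonneg: "nonneg \<gamma>"
      using Suc.prems by (auto simp: \<gamma>_def nonneg_def unitvec_def)
    have \<gamma>_coord: "(\<gamma> + unitvec i) k = int c" if "i \<noteq> k" for i
      using Suc.prems that by (simp add: \<gamma>_def unitvec_def)
    have "\<gamma> + unitvec k \<in> supp_mi I \<longleftrightarrow> \<gamma> + unitvec k \<in> supp_mi I'"
    proof (rule supp_mi_agree_at_add_unitvec[OF \<gamma>_nonneg])
      show "m_fun I \<gamma> = m_fun I' \<gamma>"
        using assms(3) \<gamma>_nonneg by blast
      show "\<gamma> + unitvec i \<in> supp_mi I \<longleftrightarrow> \<gamma> + unitvec i \<in> supp_mi I'" if "i \<noteq> k" for i
        by (rule Suc.IH[OF nonneg_add_unitvec[OF \<gamma>_nonneg] \<gamma>_coord[OF that]])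
    qed
    then show ?case
      by (simp add: \<gamma>_def)
  qed
  then have "\<beta> \<in> supp_mi I \<longleftrightarrow> \<beta> \<in> supp_mi I'" if "nonneg \<beta>" for \<beta>
    using agree[OF that, of "nat (\<beta> k)"] that by (simp add: nonneg_def)
  then show ?thesis
    by (auto simp: supp_mi_def)
qed

lemma xmon_mem_iff_supp_mi:
  "xmon m \<in> I \<longleftrightarrow> (\<lambda>i. int (Poly_Mapping.lookup m i)) \<in> supp_mi I"
  by (simp add: supp_mi_def nonneg_def to_mon_of_lookup)

theorem corollary3p3:
  fixes I I' :: "('n::finite, 'k::field) mpoly set"
  assumes "monomial_ideal I" and "monomial_ideal I'"
    and "\<forall>\<alpha>. nonneg \<alpha> \<longrightarrow> m_fun I \<alpha> = m_fun I' \<alpha>"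
    and "\<forall>\<alpha>. (\<not> nonneg \<alpha> \<and> (\<exists>k. nonneg (\<alpha> + unitvec k) \<and> m_fun I (\<alpha> + unitvec k) = 0))
              \<longrightarrow> m_fun I \<alpha> = m_fun I' \<alpha>"
  shows "I = I'"
proof (rule monomial_ideal_eqI[OF assms(1,2)])
  fix m
  show "xmon m \<in> I \<longleftrightarrow> xmon m \<in> I'"
    using supp_mi_eq_if_m_fun_agrees[OF assms] by (simp add: xmon_mem_iff_supp_mi)
qed

end
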